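(* Let $Y$ be a complex Banach space, let $I'\subseteq I\subseteq\mathbb R^n$ with $I+I'\subseteq I$ and $I'$ unbounded, let $F:I\to Y$ be uniformly continuous and Bohr $I'$-almost periodic (respectively, uniformly continuous and $I'$-uniformly recurrent), let $S\subseteq\mathbb R^n$ be bounded, and assume: (AP-E) for every $\mathbf t'\in\mathbb R^n$ there exists a finite $M>0$ such that $\mathbf t'+I'_M\subseteq I$. Set $\Omega_S:=[(I'\cup(-I'))+(I'\cup(-I'))]\cup S$. Then there exists a uniformly continuous, Bohr $\Omega_S$-almost periodic (respectively, uniformly continuous, $\Omega_S$-uniformly recurrent) function $\tilde F:\mathbb R^n\to Y$ with $\tilde F(\mathbf t)=F(\mathbf t)$ for all $\mathbf t\in I$; moreover, in the almost periodic case, such a function $\tilde F$ is unique provided that $\mathbb R^n\setminus\Omega_S$ is bounded.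
   Context: $I'_M:=\{\lambda\in I':|\lambda|\ge M\}$; $B(\mathbf t_0,l)$ is the closed Euclidean ball. For $J'\subseteq J\subseteq\mathbb R^n$ with $J+J'\subseteq J$, a continuous $G:J\to Y$ is Bohr $J'$-almost periodic if for every $\epsilon>0$ there exists $l>0$ such that for each $\mathbf t_0\in J'$ there exists $\tau\in B(\mathbf t_0,l)\cap J'$ with $\|G(\mathbf t+\tau)-G(\mathbf t)\|_Y\le\epsilon$ for all $\mathbf t\in J$; $G$ is $J'$-uniformly recurrent if there is a sequence $(\tau_k)$ in $J'$ with $|\tau_k|\to\infty$ and $\lim_{k\to\infty}\sup_{\mathbf t\in J}\|G(\mathbf t+\tau_k)-G(\mathbf t)\|_Y=0$. (Here these notions are applied with $J=I$, $J'=I'$, and with $J=\mathbb R^n$, $J'=\Omega_S$.) *)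

theory Defs
  imports "HOL-Analysis.Analysis"
begin

definition bohr_ap :: "'a::euclidean_space set \<Rightarrow> 'a set \<Rightarrow> ('a \<Rightarrow> 'b::real_normed_vector) \<Rightarrow> bool" where
  "bohr_ap J J' G \<longleftrightarrow> continuous_on J G \<and>
     (\<forall>\<epsilon>>0. \<exists>l>0. \<forall>t0\<in>J'. \<exists>\<tau>\<in>cball t0 l \<inter> J'. \<forall>t\<in>J. norm (G (t + \<tau>) - G t) \<le> \<epsilon>)"

text \<open>J'-uniform recurrence: a sequence tau_k in J' with |tau_k| to infinity and
  sup_{t in J} |G(t+tau_k) - G t| to 0 (written with epsilon, allowing infinite sups early on).\<close>
definition unif_recurrent :: "'a::euclidean_space set \<Rightarrow> 'a set \<Rightarrow> ('a \<Rightarrow> 'b::real_normed_vector) \<Rightarrow> bool" where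
  "unif_recurrent J J' G \<longleftrightarrow> continuous_on J G \<and>
     (\<exists>\<tau>::nat \<Rightarrow> 'a. (\<forall>k. \<tau> k \<in> J') \<and> filterlim (\<lambda>k. norm (\<tau> k)) at_top sequentially \<and>
        (\<forall>\<epsilon>>0. eventually (\<lambda>k. \<forall>t\<in>J. norm (G (t + \<tau> k) - G t) \<le> \<epsilon>) sequentially))"

definition trunc_set :: "'a::real_normed_vector set \<Rightarrow> real \<Rightarrow> 'a set" where
  "trunc_set I' M = {x\<in>I'. norm x \<ge> M}"

definition Omega_S :: "'a::real_normed_vector set \<Rightarrow> 'a set \<Rightarrow> 'a set" where
  "Omega_S I' S = {x + y | x y. x \<in> I' \<union> uminus ` I' \<and> y \<in> I' \<union> uminus ` I'} \<union> S"

end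

theory Submission
  imports Defs
begin

text \<open>Bohr almost periodicity of \<open>F\<close> yields almost periods \<open>\<tau>\<^sub>k \<in> I'\<close> with
  \<open>|\<tau>\<^sub>k| \<rightarrow> \<infinity>\<close> and errors tending to \<open>0\<close>, i.e. uniform recurrence, and by (AP-E) every
  \<open>t\<close> satisfies \<open>t + \<tau>\<^sub>k \<in> I\<close> for large \<open>k\<close>. So \<open>F (t + \<tau>\<^sub>k)\<close> is a Cauchy sequence,
  and its limit is a uniformly continuous extension of \<open>F\<close> that inherits every
  \<open>\<epsilon>\<close>-almost period of \<open>F\<close> on \<open>I\<close>. Negatives and sums of almost periods are almost
  periods, which gives almost periodicity with respect to \<open>\<Omega>\<^sub>S\<close> (the bounded \<open>S\<close> only
  enlarges the inclusion length), resp. recurrence along \<open>2 \<tau>\<^sub>k\<close>. Conversely, for a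
  uniformly continuous Bohr \<open>\<Omega>\<^sub>S\<close>-almost periodic extension \<open>G\<close>, a small almost
  period of \<open>G\<close> moves any point close to \<open>I\<close>, so the almost periods of \<open>F\<close> on \<open>I\<close> are
  almost periods of \<open>G\<close> everywhere; hence \<open>G t = lim F (t + \<tau>\<^sub>k)\<close>.\<close>

definition almost_period :: "'a set \<Rightarrow> ('a::plus \<Rightarrow> 'b::real_normed_vector) \<Rightarrow> real \<Rightarrow> 'a \<Rightarrow> bool"
  where "almost_period J G \<epsilon> \<tau> \<longleftrightarrow> (\<forall>t\<in>J. norm (G (t + \<tau>) - G t) \<le> \<epsilon>)"

definition recurrence_seq :: "'a set \<Rightarrow> ('a::plus \<Rightarrow> 'b::real_normed_vector) \<Rightarrow> (nat \<Rightarrow> 'a) \<Rightarrow> bool"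
  where "recurrence_seq J G \<tau> \<longleftrightarrow> (\<forall>\<epsilon>>0. eventually (\<lambda>k. almost_period J G \<epsilon> (\<tau> k)) sequentially)"

lemma bohr_ap_iff:
  "bohr_ap J J' G \<longleftrightarrow> continuous_on J G \<and>
     (\<forall>\<epsilon>>0. \<exists>l>0. \<forall>t0\<in>J'. \<exists>\<tau>\<in>cball t0 l \<inter> J'. almost_period J G \<epsilon> \<tau>)"
  by (simp add: bohr_ap_def almost_period_def)

lemma unif_recurrent_iff:
  "unif_recurrent J J' G \<longleftrightarrow> continuous_on J G \<and>
     (\<exists>\<tau>. (\<forall>k. \<tau> k \<in> J') \<and> filterlim (\<lambda>k. norm (\<tau> k)) at_top sequentially \<and> recurrence_seq J G \<tau>)"
  by (simp add: unif_recurrent_def recurrence_seq_def almost_period_def)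

lemma almost_period_mono: "almost_period J G \<epsilon> \<tau> \<Longrightarrow> \<epsilon> \<le> \<delta> \<Longrightarrow> almost_period J G \<delta> \<tau>"
  by (auto simp: almost_period_def)

lemma almost_period_uminus:
  fixes G :: "'a::group_add \<Rightarrow> 'b::real_normed_vector"
  assumes "almost_period UNIV G \<epsilon> \<tau>"
  shows "almost_period UNIV G \<epsilon> (- \<tau>)"
  unfolding almost_period_def
proof
  fix t
  have "norm (G (t - \<tau> + \<tau>) - G (t - \<tau>)) \<le> \<epsilon>"
    using assms unfolding almost_period_def by blast
  then show "norm (G (t + - \<tau>) - G t) \<le> \<epsilon>"
    by (simp add: norm_minus_commute)
qed

lemma almost_period_add:
  fixes G :: "'a::semigroup_add \<Rightarrow> 'b::real_normed_vector"
  assumes "almost_period UNIV G \<epsilon> \<sigma>" and "almost_period UNIV G \<delta> \<tau>"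
  shows "almost_period UNIV G (\<epsilon> + \<delta>) (\<sigma> + \<tau>)"
  unfolding almost_period_def
proof
  fix t
  have "norm (G (t + \<sigma> + \<tau>) - G (t + \<sigma>)) \<le> \<delta>" "norm (G (t + \<sigma>) - G t) \<le> \<epsilon>"
    using assms by (simp_all add: almost_period_def)
  then show "norm (G (t + (\<sigma> + \<tau>)) - G t) \<le> \<epsilon> + \<delta>"
    using norm_diff_triangle_le by (fastforce simp: add.assoc)
qed

lemma tendsto_shift_recurrence_seq:
  assumes "recurrence_seq J G \<tau>" and "t \<in> J"
  shows "(\<lambda>k. G (t + \<tau> k)) \<longlonglongrightarrow> G t"
proof (rule tendstoI)
  fix e :: real assume "e > 0"
  then have "eventually (\<lambda>k. almost_period J G (e/2) (\<tau> k)) sequentially"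
    using assms(1) by (simp add: recurrence_seq_def)
  then show "eventually (\<lambda>k. dist (G (t + \<tau> k)) (G t) < e) sequentially"
    by eventually_elim (use \<open>e > 0\<close> \<open>t \<in> J\<close> in \<open>fastforce simp: almost_period_def dist_norm\<close>)
qed

lemma recurrence_seq_double:
  fixes G :: "'a::semigroup_add \<Rightarrow> 'b::real_normed_vector"
  assumes "recurrence_seq UNIV G \<tau>"
  shows "recurrence_seq UNIV G (\<lambda>k. \<tau> k + \<tau> k)"
  unfolding recurrence_seq_def
proof (intro allI impI)
  fix \<epsilon> :: real assume "\<epsilon> > 0"
  then have "eventually (\<lambda>k. almost_period UNIV G (\<epsilon>/2) (\<tau> k)) sequentially"
    using assms by (simp add: recurrence_seq_def)
  then show "eventually (\<lambda>k. almost_period UNIV G \<epsilon> (\<tau> k + \<tau> k)) sequentially"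
    by eventually_elim (metis almost_period_add field_sum_of_halves)
qed

lemma bohr_ap_imp_unif_recurrent:
  assumes ap: "bohr_ap J J' G" and "\<not> bounded J'"
  shows "unif_recurrent J J' G"
proof -
  have "\<exists>\<tau>\<in>J'. real k \<le> norm \<tau> \<and> almost_period J G (inverse (real (Suc k))) \<tau>" for k
  proof -
    have "inverse (real (Suc k)) > 0" by simp
    then obtain l where "l > 0" and l: "\<forall>t0\<in>J'. \<exists>\<tau>\<in>cball t0 l \<inter> J'. almost_period J G (inverse (real (Suc k))) \<tau>"
      using ap unfolding bohr_ap_iff by blast
    obtain t0 where "t0 \<in> J'" "norm t0 > real k + l"
      using \<open>\<not> bounded J'\<close> unfolding bounded_iff by (meson not_le)
    with l obtain \<tau> where "\<tau> \<in> J'" "dist t0 \<tau> \<le> l" "almost_period J G (inverse (real (Suc k))) \<tau>"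
      by auto
    moreover have "norm t0 \<le> norm \<tau> + dist t0 \<tau>"
      by (metis dist_norm norm_triangle_sub add.commute)
    ultimately show ?thesis
      using \<open>norm t0 > real k + l\<close> by (intro bexI[of _ \<tau>]) auto
  qed
  then obtain \<tau> where \<tau>: "\<And>k. \<tau> k \<in> J'" "\<And>k. real k \<le> norm (\<tau> k)"
      "\<And>k. almost_period J G (inverse (real (Suc k))) (\<tau> k)"
    by metis
  have "filterlim (\<lambda>k. norm (\<tau> k)) at_top sequentially"
    by (rule filterlim_at_top_mono[OF filterlim_real_sequentially]) (use \<tau>(2) in auto)
  moreover have "recurrence_seq J G \<tau>"
    unfolding recurrence_seq_def
  proof (intro allI impI)
    fix \<epsilon> :: real assume "\<epsilon> > 0"
    with LIMSEQ_inverse_real_of_nat have "eventually (\<lambda>k. inverse (real (Suc k)) < \<epsilon>) sequentially"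
      by (rule order_tendstoD)
    then show "eventually (\<lambda>k. almost_period J G \<epsilon> (\<tau> k)) sequentially"
      by eventually_elim (use \<tau>(3) almost_period_mono less_imp_le in blast)
  qed
  ultimately show ?thesis
    using ap \<tau>(1) by (auto simp: unif_recurrent_iff bohr_ap_iff)
qed

lemma bohr_ap_Un_uminus:
  fixes G :: "'a::euclidean_space \<Rightarrow> 'b::real_normed_vector"
  assumes "bohr_ap UNIV J' G"
  shows "bohr_ap UNIV (J' \<union> uminus ` J') G"
  unfolding bohr_ap_iff
proof (intro conjI allI impI)
  show "continuous_on UNIV G"
    using assms by (simp add: bohr_ap_iff)
  fix \<epsilon> :: real assume "\<epsilon> > 0"
  then obtain l where "l > 0" and l: "\<forall>t0\<in>J'. \<exists>\<tau>\<in>cball t0 l \<inter> J'. almost_period UNIV G \<epsilon> \<tau>"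
    using assms unfolding bohr_ap_iff by blast
  have "\<exists>\<tau>\<in>cball (- t0) l \<inter> (J' \<union> uminus ` J'). almost_period UNIV G \<epsilon> \<tau>" if "t0 \<in> J'" for t0
  proof -
    from l that obtain \<tau> where "\<tau> \<in> cball t0 l" "\<tau> \<in> J'" "almost_period UNIV G \<epsilon> \<tau>"
      by blast
    then show ?thesis
      by (intro bexI[of _ "- \<tau>"]) (auto simp: almost_period_uminus dist_norm norm_minus_commute)
  qed
  with l \<open>l > 0\<close> show "\<exists>l>0. \<forall>t0\<in>J' \<union> uminus ` J'.
      \<exists>\<tau>\<in>cball t0 l \<inter> (J' \<union> uminus ` J'). almost_period UNIV G \<epsilon> \<tau>"
    by blast
qed

lemma bohr_ap_set_plus:
  fixes G :: "'a::euclidean_space \<Rightarrow> 'b::real_normed_vector"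
  assumes "bohr_ap UNIV J' G"
  shows "bohr_ap UNIV (J' + J') G"
  unfolding bohr_ap_iff
proof (intro conjI allI impI)
  show "continuous_on UNIV G"
    using assms by (simp add: bohr_ap_iff)
  fix \<epsilon> :: real assume "\<epsilon> > 0"
  then obtain l where "l > 0" and l: "\<forall>t0\<in>J'. \<exists>\<tau>\<in>cball t0 l \<inter> J'. almost_period UNIV G (\<epsilon>/2) \<tau>"
    using assms unfolding bohr_ap_iff by (meson half_gt_zero)
  have "\<exists>\<tau>\<in>cball t0 (2 * l) \<inter> (J' + J'). almost_period UNIV G \<epsilon> \<tau>" if "t0 \<in> J' + J'" for t0
  proof -
    from that obtain x y where "t0 = x + y" "x \<in> J'" "y \<in> J'"
      by (auto elim: set_plus_elim)
    with l obtain \<sigma> \<tau> where "\<sigma> \<in> J'" "dist x \<sigma> \<le> l" "almost_period UNIV G (\<epsilon>/2) \<sigma>"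
        "\<tau> \<in> J'" "dist y \<tau> \<le> l" "almost_period UNIV G (\<epsilon>/2) \<tau>"
      by (metis IntE mem_cball)
    moreover have "dist (x + y) (\<sigma> + \<tau>) \<le> dist x \<sigma> + dist y \<tau>"
      by (rule dist_triangle_add)
    ultimately show ?thesis
      using \<open>t0 = x + y\<close> almost_period_add[of G "\<epsilon>/2" \<sigma> "\<epsilon>/2" \<tau>]
      by (intro bexI[of _ "\<sigma> + \<tau>"]) auto
  qed
  with \<open>l > 0\<close> show "\<exists>l>0. \<forall>t0\<in>J' + J'.
      \<exists>\<tau>\<in>cball t0 l \<inter> (J' + J'). almost_period UNIV G \<epsilon> \<tau>"
    by (intro exI[of _ "2 * l"]) auto
qed

lemma bohr_ap_Un_bounded:
  assumes "bohr_ap J J' G" and "j \<in> J'" and "bounded S"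
  shows "bohr_ap J (J' \<union> S) G"
  unfolding bohr_ap_iff
proof (intro conjI allI impI)
  show "continuous_on J G"
    using assms by (simp add: bohr_ap_iff)
  fix \<epsilon> :: real assume "\<epsilon> > 0"
  then obtain l where "l > 0" and l: "\<forall>t0\<in>J'. \<exists>\<tau>\<in>cball t0 l \<inter> J'. almost_period J G \<epsilon> \<tau>"
    using assms(1) unfolding bohr_ap_iff by blast
  obtain R where "R > 0" and R: "\<forall>x\<in>S. norm x \<le> R"
    using \<open>bounded S\<close> by (auto simp: bounded_pos)
  define L where "L = l + R + norm j"
  have "l \<le> L"
    unfolding L_def using \<open>R > 0\<close> norm_ge_zero[of j] by linarith
  have "\<exists>\<tau>\<in>cball t0 L \<inter> (J' \<union> S). almost_period J G \<epsilon> \<tau>" if "t0 \<in> J' \<union> S" for t0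
  proof (cases "t0 \<in> J'")
    case True
    with l obtain \<tau> where "\<tau> \<in> J'" "dist t0 \<tau> \<le> l" "almost_period J G \<epsilon> \<tau>"
      by (metis IntE mem_cball)
    then show ?thesis
      using \<open>l \<le> L\<close> by (intro bexI[of _ \<tau>]) auto
  next
    case False
    with that R have "norm t0 \<le> R" by blast
    from l \<open>j \<in> J'\<close> obtain \<tau> where "\<tau> \<in> J'" "dist j \<tau> \<le> l" "almost_period J G \<epsilon> \<tau>"
      by (metis IntE mem_cball)
    moreover have "dist t0 \<tau> \<le> norm t0 + norm j + dist j \<tau>"
      by (metis dist_triangle dist_norm norm_triangle_ineq4 add_right_mono order_trans)
    ultimately show ?thesis
      using \<open>norm t0 \<le> R\<close> by (intro bexI[of _ \<tau>]) (auto simp: L_def)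
  qed
  with \<open>l > 0\<close> \<open>l \<le> L\<close> show "\<exists>l>0. \<forall>t0\<in>J' \<union> S.
      \<exists>\<tau>\<in>cball t0 l \<inter> (J' \<union> S). almost_period J G \<epsilon> \<tau>"
    by (intro exI[of _ L]) auto
qed

lemma unif_recurrent_double:
  fixes G :: "'a::euclidean_space \<Rightarrow> 'b::real_normed_vector"
  assumes "unif_recurrent UNIV J' G" and "\<And>x. x \<in> J' \<Longrightarrow> x + x \<in> J''"
  shows "unif_recurrent UNIV J'' G"
proof -
  obtain \<tau> where "\<forall>k. \<tau> k \<in> J'" and \<tau>: "filterlim (\<lambda>k. norm (\<tau> k)) at_top sequentially"
      "recurrence_seq UNIV G \<tau>"
    using assms(1) by (auto simp: unif_recurrent_iff)
  have "norm (\<tau> k) \<le> norm (\<tau> k + \<tau> k)" for k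
    by (simp add: scaleR_2[symmetric])
  then have "filterlim (\<lambda>k. norm (\<tau> k + \<tau> k)) at_top sequentially"
    by (intro filterlim_at_top_mono[OF \<tau>(1)]) auto
  then show ?thesis
    using assms \<open>\<forall>k. \<tau> k \<in> J'\<close> recurrence_seq_double[OF \<tau>(2)]
    by (auto simp: unif_recurrent_iff intro!: exI[of _ "\<lambda>k. \<tau> k + \<tau> k"])
qed

lemma Omega_S_eq: "Omega_S I' S = (I' \<union> uminus ` I') + (I' \<union> uminus ` I') \<union> S"
  by (auto simp: Omega_S_def set_plus_def)

lemma bohr_ap_Omega_S:
  fixes G :: "'a::euclidean_space \<Rightarrow> 'b::real_normed_vector"
  assumes "bohr_ap UNIV I' G" and "p \<in> I'" and "bounded S"
  shows "bohr_ap UNIV (Omega_S I' S) G"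
proof -
  have "p + p \<in> (I' \<union> uminus ` I') + (I' \<union> uminus ` I')"
    using \<open>p \<in> I'\<close> by blast
  then show ?thesis
    unfolding Omega_S_eq
    by (intro bohr_ap_Un_bounded bohr_ap_set_plus bohr_ap_Un_uminus assms)
qed

lemma unif_recurrent_Omega_S:
  fixes G :: "'a::euclidean_space \<Rightarrow> 'b::real_normed_vector"
  assumes "unif_recurrent UNIV I' G"
  shows "unif_recurrent UNIV (Omega_S I' S) G"
  using assms by (rule unif_recurrent_double) (auto simp: Omega_S_def)

lemma Omega_S_translates_finite_into:
  fixes I I' :: "'a::real_normed_vector set"
  assumes ape: "\<forall>t'. \<exists>M>0. (\<lambda>x. t' + x) ` trunc_set I' M \<subseteq> I"
    and add: "\<And>t \<tau>. t \<in> I \<Longrightarrow> \<tau> \<in> I' \<Longrightarrow> t + \<tau> \<in> I"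
    and "\<not> bounded I'" and "finite X"
  shows "\<exists>q\<in>Omega_S I' S. (\<lambda>x. x + q) ` X \<subseteq> I"
proof -
  obtain M where M: "\<And>x. M x > 0" "\<And>x. (\<lambda>y. x + y) ` trunc_set I' (M x) \<subseteq> I"
    using ape by metis
  obtain p where "p \<in> I'" and p: "norm p > (\<Sum>x\<in>X. M x)"
    using \<open>\<not> bounded I'\<close> unfolding bounded_iff by (meson not_le)
  have "x + p + p \<in> I" if "x \<in> X" for x
  proof -
    have "M x \<le> (\<Sum>x\<in>X. M x)"
      using \<open>finite X\<close> that M(1) by (intro member_le_sum) (auto intro: less_imp_le)
    with p \<open>p \<in> I'\<close> have "p \<in> trunc_set I' (M x)"
      by (simp add: trunc_set_def)
    with M(2) have "x + p \<in> I" by blast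
    with add \<open>p \<in> I'\<close> show ?thesis by blast
  qed
  then have "(\<lambda>x. x + (p + p)) ` X \<subseteq> I"
    by (auto simp: add.assoc)
  moreover have "p + p \<in> Omega_S I' S"
    using \<open>p \<in> I'\<close> by (auto simp: Omega_S_def)
  ultimately show ?thesis by blast
qed

lemma bohr_ap_shift_near:
  fixes G :: "'a::euclidean_space \<Rightarrow> 'b::real_normed_vector"
  assumes ap: "bohr_ap UNIV J' G"
    and translate: "\<And>X. finite X \<Longrightarrow> \<exists>q\<in>J'. (\<lambda>x. x + q) ` X \<subseteq> I"
    and "\<delta> > 0" and "d > 0"
  obtains \<sigma> z where "almost_period UNIV G \<delta> \<sigma>" and "z \<in> I" and "dist z (s + \<sigma>) < d"
proof -
  obtain l where "l > 0" and l: "\<forall>t0\<in>J'. \<exists>\<sigma>\<in>cball t0 l \<inter> J'. almost_period UNIV G \<delta> \<sigma>"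
    using ap \<open>\<delta> > 0\<close> unfolding bohr_ap_iff by blast
  obtain X where "finite X" and X: "cball s l \<subseteq> (\<Union>x\<in>X. ball x d)"
    using seq_compact_imp_totally_bounded[OF compact_imp_seq_compact[OF compact_cball], of s l] \<open>d > 0\<close>
    by auto
  obtain q where "q \<in> J'" and q: "(\<lambda>x. x + q) ` X \<subseteq> I"
    using translate[OF \<open>finite X\<close>] by blast
  with l obtain \<sigma> where "dist q \<sigma> \<le> l" and \<sigma>: "almost_period UNIV G \<delta> \<sigma>"
    by auto
  moreover have "dist s (s + \<sigma> - q) = dist q \<sigma>"
    by (simp add: dist_norm algebra_simps)
  ultimately have "s + \<sigma> - q \<in> cball s l"
    by simp
  with X have "s + \<sigma> - q \<in> (\<Union>x\<in>X. ball x d)"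
    by (rule subsetD)
  then obtain x where "x \<in> X" and "dist x (s + \<sigma> - q) < d"
    by auto
  moreover have "dist (x + q) (s + \<sigma>) = dist x (s + \<sigma> - q)"
    by (simp add: dist_norm algebra_simps)
  ultimately have "dist (x + q) (s + \<sigma>) < d"
    by simp
  moreover have "x + q \<in> I"
    using q \<open>x \<in> X\<close> by blast
  ultimately show thesis
    using \<sigma> that by blast
qed

text \<open>An almost period \<open>\<sigma>\<close> of \<open>G\<close> carries \<open>s\<close> close to some \<open>z \<in> I\<close>, and then
  \<open>G (s + \<tau>) \<approx> G (s + \<sigma> + \<tau>) \<approx> G (z + \<tau>) \<approx> G z \<approx> G (s + \<sigma>) \<approx> G s\<close>,
  where only the middle step costs \<open>\<epsilon>\<close>.\<close>
lemma almost_period_extend_from: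
  fixes G :: "'a::euclidean_space \<Rightarrow> 'b::real_normed_vector"
  assumes uc: "uniformly_continuous_on UNIV G" and ap: "bohr_ap UNIV J' G"
    and translate: "\<And>X. finite X \<Longrightarrow> \<exists>q\<in>J'. (\<lambda>x. x + q) ` X \<subseteq> I"
    and invariant: "\<And>t. t \<in> I \<Longrightarrow> t + \<tau> \<in> I"
    and \<tau>: "almost_period I G \<epsilon> \<tau>"
  shows "almost_period UNIV G \<epsilon> \<tau>"
  unfolding almost_period_def
proof
  fix s
  show "norm (G (s + \<tau>) - G s) \<le> \<epsilon>"
  proof (rule field_le_epsilon)
    fix e :: real assume "e > 0"
    then have "e/4 > 0" by simp
    with uc obtain d where "d > 0" and d: "\<And>x y. dist x y < d \<Longrightarrow> dist (G x) (G y) < e/4"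
      by (rule uniformly_continuous_onE) blast
    obtain \<sigma> z where \<sigma>: "almost_period UNIV G (e/4) \<sigma>" and "z \<in> I" and "dist z (s + \<sigma>) < d"
      using bohr_ap_shift_near[OF ap translate, of "e/4" d] \<open>e > 0\<close> \<open>d > 0\<close>
      by auto
    have 1: "norm (G (s + \<tau>) - G (s + \<tau> + \<sigma>)) \<le> e/4"
      using \<sigma> by (simp add: almost_period_def norm_minus_commute)
    have 2: "norm (G (s + \<tau> + \<sigma>) - G (z + \<tau>)) \<le> e/4"
    proof -
      have "dist (s + \<tau> + \<sigma>) (z + \<tau>) = dist z (s + \<sigma>)"
        by (metis add.commute add.left_commute dist_add_cancel2 dist_commute)
      then show ?thesis
        using d[of "s + \<tau> + \<sigma>" "z + \<tau>"] \<open>dist z (s + \<sigma>) < d\<close> by (simp add: dist_norm)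
    qed
    have 3: "norm (G (z + \<tau>) - G z) \<le> \<epsilon>"
      using \<tau> \<open>z \<in> I\<close> by (simp add: almost_period_def)
    have 4: "norm (G z - G (s + \<sigma>)) \<le> e/4"
      using d \<open>dist z (s + \<sigma>) < d\<close> by (simp add: dist_norm less_imp_le)
    have 5: "norm (G (s + \<sigma>) - G s) \<le> e/4"
      using \<sigma> by (simp add: almost_period_def)
    have "norm (G (s + \<tau>) - G s) \<le> e/4 + e/4 + \<epsilon> + e/4 + e/4"
      by (rule norm_diff_triangle_le[OF norm_diff_triangle_le[OF norm_diff_triangle_le[OF
            norm_diff_triangle_le[OF 1 2] 3] 4] 5])
    then show "norm (G (s + \<tau>) - G s) \<le> \<epsilon> + e"
      by simp
  qed
qed

locale translation_limit =
  fixes F :: "'a::euclidean_space \<Rightarrow> 'b::banach" and I :: "'a set" and \<tau> :: "nat \<Rightarrow> 'a"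
  assumes eventually_shift_mem: "eventually (\<lambda>k. t + \<tau> k \<in> I) sequentially"
    and recurrence: "recurrence_seq I F \<tau>"
begin

definition extension :: "'a \<Rightarrow> 'b"
  where "extension t = lim (\<lambda>k. F (t + \<tau> k))"

text \<open>\<open>F (t + \<tau> m) \<approx> F (t + \<tau> m + \<tau> n) = F (t + \<tau> n + \<tau> m) \<approx> F (t + \<tau> n)\<close>, since
  \<open>t + \<tau> m\<close> and \<open>t + \<tau> n\<close> lie in \<open>I\<close>.\<close>
lemma Cauchy_shifts: "Cauchy (\<lambda>k. F (t + \<tau> k))"
proof (rule CauchyI)
  fix e :: real assume "e > 0"
  then have "eventually (\<lambda>k. t + \<tau> k \<in> I \<and> almost_period I F (e/3) (\<tau> k)) sequentially"
    using eventually_shift_mem recurrence by (auto simp: recurrence_seq_def intro: eventually_conj)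
  then obtain N where N: "\<And>k. k \<ge> N \<Longrightarrow> t + \<tau> k \<in> I \<and> almost_period I F (e/3) (\<tau> k)"
    by (auto simp: eventually_sequentially)
  have "norm (F (t + \<tau> m) - F (t + \<tau> n)) < e" if "m \<ge> N" "n \<ge> N" for m n
  proof -
    have "norm (F (t + \<tau> m) - F (t + \<tau> m + \<tau> n)) \<le> e/3"
      using N[OF that(1)] N[OF that(2)] by (simp add: almost_period_def norm_minus_commute)
    moreover have "norm (F (t + \<tau> n + \<tau> m) - F (t + \<tau> n)) \<le> e/3"
      using N[OF that(1)] N[OF that(2)] by (simp add: almost_period_def)
    moreover have "t + \<tau> m + \<tau> n = t + \<tau> n + \<tau> m"
      by (simp add: algebra_simps)
    ultimately have "norm (F (t + \<tau> m) - F (t + \<tau> n)) \<le> e/3 + e/3"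
      by (metis norm_diff_triangle_le)
    with \<open>e > 0\<close> show ?thesis by simp
  qed
  then show "\<exists>N. \<forall>m\<ge>N. \<forall>n\<ge>N. norm (F (t + \<tau> m) - F (t + \<tau> n)) < e"
    by blast
qed

lemma shifts_LIMSEQ: "(\<lambda>k. F (t + \<tau> k)) \<longlonglongrightarrow> extension t"
  unfolding extension_def using Cauchy_shifts by (simp add: Cauchy_convergent_iff convergent_LIMSEQ_iff)

lemma extension_eq: "t \<in> I \<Longrightarrow> extension t = F t"
  using shifts_LIMSEQ tendsto_shift_recurrence_seq[OF recurrence] by (rule LIMSEQ_unique)

lemma almost_period_extension:
  assumes "almost_period I F \<epsilon> \<sigma>"
  shows "almost_period UNIV extension \<epsilon> \<sigma>"
  unfolding almost_period_def
proof
  fix t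
  have "(\<lambda>k. F (t + \<tau> k + \<sigma>) - F (t + \<tau> k)) \<longlonglongrightarrow> extension (t + \<sigma>) - extension t"
    using shifts_LIMSEQ[of "t + \<sigma>"] by (intro tendsto_diff shifts_LIMSEQ) (simp add: algebra_simps)
  moreover have "eventually (\<lambda>k. norm (F (t + \<tau> k + \<sigma>) - F (t + \<tau> k)) \<le> \<epsilon>) sequentially"
    using eventually_shift_mem[of t] by eventually_elim (use assms in \<open>simp add: almost_period_def\<close>)
  ultimately show "norm (extension (t + \<sigma>) - extension t) \<le> \<epsilon>"
    by (rule Lim_norm_ubound[OF trivial_limit_sequentially])
qed

lemma recurrence_seq_extension: "recurrence_seq UNIV extension \<tau>"
  using recurrence by (auto simp: recurrence_seq_def elim!: eventually_mono intro: almost_period_extension)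

lemma uniformly_continuous_extension:
  assumes "uniformly_continuous_on I F"
  shows "uniformly_continuous_on UNIV extension"
  unfolding uniformly_continuous_on_def
proof (intro allI impI)
  fix e :: real assume "e > 0"
  then have "e/2 > 0" by simp
  with assms obtain d where "d > 0"
    and d: "\<And>x x'. x \<in> I \<Longrightarrow> x' \<in> I \<Longrightarrow> dist x' x < d \<Longrightarrow> dist (F x') (F x) < e/2"
    by (rule uniformly_continuous_onE) blast
  have "dist (extension x') (extension x) < e" if "dist x' x < d" for x x'
  proof -
    have "eventually (\<lambda>k. norm (F (x' + \<tau> k) - F (x + \<tau> k)) \<le> e/2) sequentially"
      using eventually_shift_mem[of x] eventually_shift_mem[of x']
    proof eventually_elim
      case (elim k)
      with d[of "x + \<tau> k" "x' + \<tau> k"] \<open>dist x' x < d\<close> show ?case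
        by (simp add: dist_norm)
    qed
    with tendsto_diff[OF shifts_LIMSEQ shifts_LIMSEQ] have "norm (extension x' - extension x) \<le> e/2"
      by (rule Lim_norm_ubound[OF trivial_limit_sequentially])
    with \<open>e > 0\<close> show ?thesis by (simp add: dist_norm)
  qed
  with \<open>d > 0\<close> show "\<exists>d>0. \<forall>x\<in>UNIV. \<forall>x'\<in>UNIV.
      dist x' x < d \<longrightarrow> dist (extension x') (extension x) < e"
    by blast
qed

lemma extension_unique:
  assumes "recurrence_seq UNIV G \<tau>" and "\<forall>t\<in>I. G t = F t"
  shows "G = extension"
proof
  fix t
  have "(\<lambda>k. G (t + \<tau> k)) \<longlonglongrightarrow> G t"
    using assms(1) by (rule tendsto_shift_recurrence_seq) simp
  moreover have "(\<lambda>k. G (t + \<tau> k)) \<longlonglongrightarrow> extension t"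
    using shifts_LIMSEQ
  proof (rule Lim_transform_eventually)
    show "eventually (\<lambda>k. F (t + \<tau> k) = G (t + \<tau> k)) sequentially"
      using eventually_shift_mem[of t] by eventually_elim (use assms(2) in simp)
  qed
  ultimately show "G t = extension t"
    by (rule LIMSEQ_unique)
qed

lemma bohr_ap_extension:
  assumes "uniformly_continuous_on I F" and "bohr_ap I I' F"
  shows "bohr_ap UNIV I' extension"
proof -
  have "continuous_on UNIV extension"
    using uniformly_continuous_extension[OF assms(1)] by (rule uniformly_continuous_imp_continuous)
  with assms(2) show ?thesis
    unfolding bohr_ap_iff by (meson almost_period_extension)
qed

lemma extension_unique_bohr_ap:
  assumes uc: "uniformly_continuous_on UNIV G" and ap: "bohr_ap UNIV J' G"
    and translate: "\<And>X. finite X \<Longrightarrow> \<exists>q\<in>J'. (\<lambda>x. x + q) ` X \<subseteq> I"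
    and invariant: "\<And>t k. t \<in> I \<Longrightarrow> t + \<tau> k \<in> I"
    and G: "\<forall>t\<in>I. G t = F t"
  shows "G = extension"
proof (rule extension_unique[OF _ G])
  show "recurrence_seq UNIV G \<tau>"
    unfolding recurrence_seq_def
  proof (intro allI impI)
    fix \<epsilon> :: real assume "\<epsilon> > 0"
    with recurrence have "eventually (\<lambda>k. almost_period I F \<epsilon> (\<tau> k)) sequentially"
      by (simp add: recurrence_seq_def)
    then show "eventually (\<lambda>k. almost_period UNIV G \<epsilon> (\<tau> k)) sequentially"
    proof eventually_elim
      case (elim k)
      with G invariant have "almost_period I G \<epsilon> (\<tau> k)"
        by (simp add: almost_period_def)
      with uc ap translate invariant show ?case
        by (rule almost_period_extend_from)
    qed
  qed
qed

end

lemma translation_limit_of_unif_recurrent: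
  fixes F :: "'a::euclidean_space \<Rightarrow> 'b::banach"
  assumes ape: "\<forall>t'. \<exists>M>0. (\<lambda>x. t' + x) ` trunc_set I' M \<subseteq> I"
    and "unif_recurrent I I' F"
  obtains \<tau> where "translation_limit F I \<tau>" and "\<forall>k. \<tau> k \<in> I'"
    and "filterlim (\<lambda>k. norm (\<tau> k)) at_top sequentially"
proof -
  obtain \<tau> where \<tau>: "\<forall>k. \<tau> k \<in> I'" "filterlim (\<lambda>k. norm (\<tau> k)) at_top sequentially"
      "recurrence_seq I F \<tau>"
    using assms(2) by (auto simp: unif_recurrent_iff)
  have "eventually (\<lambda>k. t + \<tau> k \<in> I) sequentially" for t
  proof -
    obtain M where M: "(\<lambda>x. t + x) ` trunc_set I' M \<subseteq> I"
      using ape by blast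
    from \<tau>(2) have "eventually (\<lambda>k. M \<le> norm (\<tau> k)) sequentially"
      by (simp add: filterlim_at_top)
    then show ?thesis
      by eventually_elim (use M \<tau>(1) in \<open>auto simp: trunc_set_def\<close>)
  qed
  with \<tau> show thesis
    by (intro that) (auto simp: translation_limit_def)
qed

theorem theorem2p35:
  fixes F :: "'a::euclidean_space \<Rightarrow> 'b::banach"
    and I I' S :: "'a set"
  assumes sub: "I' \<subseteq> I"
    and add: "\<And>t \<tau>. t \<in> I \<Longrightarrow> \<tau> \<in> I' \<Longrightarrow> t + \<tau> \<in> I"
    and unb: "\<not> bounded I'"
    and bS: "bounded S"
    and APE: "\<forall>t'. \<exists>M>0. (\<lambda>x. t' + x) ` trunc_set I' M \<subseteq> I"
  shows "(uniformly_continuous_on I F \<and> bohr_ap I I' F \<longrightarrow>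
            (\<exists>Ft. uniformly_continuous_on UNIV Ft \<and> bohr_ap UNIV (Omega_S I' S) Ft \<and>
                  (\<forall>t\<in>I. Ft t = F t)) \<and>
            (bounded (UNIV - Omega_S I' S) \<longrightarrow>
               (\<forall>G1 G2. uniformly_continuous_on UNIV G1 \<and> bohr_ap UNIV (Omega_S I' S) G1 \<and>
                        (\<forall>t\<in>I. G1 t = F t) \<and>
                        uniformly_continuous_on UNIV G2 \<and> bohr_ap UNIV (Omega_S I' S) G2 \<and>
                        (\<forall>t\<in>I. G2 t = F t) \<longrightarrow> G1 = G2)))
         \<and> (uniformly_continuous_on I F \<and> unif_recurrent I I' F \<longrightarrow>
            (\<exists>Ft. uniformly_continuous_on UNIV Ft \<and> unif_recurrent UNIV (Omega_S I' S) Ft \<and>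
                  (\<forall>t\<in>I. Ft t = F t)))"
proof (intro conjI impI)
  assume F: "uniformly_continuous_on I F \<and> bohr_ap I I' F"
  then obtain \<tau> where lim: "translation_limit F I \<tau>" and \<tau>: "\<forall>k. \<tau> k \<in> I'"
    using translation_limit_of_unif_recurrent[OF APE] bohr_ap_imp_unif_recurrent[OF _ unb] by metis
  interpret translation_limit F I \<tau> by (rule lim)
  obtain p where "p \<in> I'"
    using unb by fastforce
  show "\<exists>Ft. uniformly_continuous_on UNIV Ft \<and> bohr_ap UNIV (Omega_S I' S) Ft \<and> (\<forall>t\<in>I. Ft t = F t)"
    using F bohr_ap_Omega_S[OF bohr_ap_extension \<open>p \<in> I'\<close> bS] uniformly_continuous_extension extension_eq
    by blast
  \<comment> \<open>Uniqueness does not need \<open>\<real>\<^sup>n \<setminus> \<Omega>\<^sub>S\<close> bounded: (AP-E) alone lets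
    \<open>\<Omega>\<^sub>S\<close> translate finite sets into \<open>I\<close>.\<close>
  show "\<forall>G1 G2. uniformly_continuous_on UNIV G1 \<and> bohr_ap UNIV (Omega_S I' S) G1 \<and>
                        (\<forall>t\<in>I. G1 t = F t) \<and>
                        uniformly_continuous_on UNIV G2 \<and> bohr_ap UNIV (Omega_S I' S) G2 \<and>
                        (\<forall>t\<in>I. G2 t = F t) \<longrightarrow> G1 = G2"
    using extension_unique_bohr_ap[OF _ _ Omega_S_translates_finite_into[OF APE add unb]] add \<tau>
    by metis
next
  assume F: "uniformly_continuous_on I F \<and> unif_recurrent I I' F"
  then obtain \<tau> where lim: "translation_limit F I \<tau>" and \<tau>: "\<forall>k. \<tau> k \<in> I'"
      "filterlim (\<lambda>k. norm (\<tau> k)) at_top sequentially"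
    using translation_limit_of_unif_recurrent[OF APE] by metis
  interpret translation_limit F I \<tau> by (rule lim)
  have "unif_recurrent UNIV I' extension"
    using \<tau> recurrence_seq_extension uniformly_continuous_extension F
    by (auto simp: unif_recurrent_iff uniformly_continuous_imp_continuous)
  then show "\<exists>Ft. uniformly_continuous_on UNIV Ft \<and> unif_recurrent UNIV (Omega_S I' S) Ft \<and>
      (\<forall>t\<in>I. Ft t = F t)"
    using F unif_recurrent_Omega_S uniformly_continuous_extension extension_eq by blast
qed

end
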